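(* Let $n\ge 1$, and let $a_0,a_1,\dots,a_{n-1}$ and $b_1,\dots,b_{n-1}$ be positive integers. Define $p_0=a_0$, $p_1=a_0a_1+b_1$, and $p_k=a_kp_{k-1}+b_kp_{k-2}$ for $k\ge 2$ (so $p_{n-1}/q_{n-1}$ is the value of the generalized continued fraction $a_0+\cfrac{b_1}{a_1+\cfrac{b_2}{\ddots+\cfrac{b_{n-1}}{a_{n-1}}}}$, where $q_0=1$, $q_1=a_1$, $q_k=a_kq_{k-1}+b_kq_{k-2}$; $p_{n-1},q_{n-1}$ need not be coprime). Then $$Z\bigl(D_n(a_0,a_1,\dots,a_{n-1};\,b_1,\dots,b_{n-1})\bigr)=p_{n-1}.$$
   Context: Graphs may have parallel edges, regarded as distinct. For a (multi)graph $G$, $p(G,k)$ is the number of sets of $k$ pairwise disjoint edges (no two sharing an endpoint), $p(G,0)=1$, and $Z(G)=\sum_{k\ge0}p(G,k)$ (Hosoya index). For positive integers $x_1,\dots,x_n$ and $y_1,\dots,y_{n-1}$, the caterpillar-bond graph $D_n(x_1,\dots,x_n;y_1,\dots,y_{n-1})$ is the multigraph obtained as follows: take vertices $v_1,\dots,v_n$; for each $i=1,\dots,n-1$ join $v_i$ and $v_{i+1}$ by exactly $y_i$ parallel edges; and for each $i=1,\dots,n$ attach $x_i-1$ new pendant vertices, each joined to $v_i$ by a single edge. There are no other vertices or edges. *)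

theory Defs
  imports Main
begin

text \<open>A multigraph is given by a finite set of edge labels E and an endpoint map
  ends (parallel edges are distinct labels with the same endpoints).\<close>

definition matchings :: "'e set \<Rightarrow> ('e \<Rightarrow> 'v set) \<Rightarrow> 'e set set" where
  "matchings E ends = {M. M \<subseteq> E \<and> (\<forall>e\<in>M. \<forall>f\<in>M. e \<noteq> f \<longrightarrow> ends e \<inter> ends f = {})}"

definition pmatch :: "'e set \<Rightarrow> ('e \<Rightarrow> 'v set) \<Rightarrow> nat \<Rightarrow> nat" where
  "pmatch E ends k = card {M \<in> matchings E ends. card M = k}"

text \<open>Hosoya index Z(G) = sum over k >= 0 of p(G,k); p(G,k) = 0 for k > |E|.\<close>
definition hosoya :: "'e set \<Rightarrow> ('e \<Rightarrow> 'v set) \<Rightarrow> nat" where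
  "hosoya E ends = (\<Sum>k\<le>card E. pmatch E ends k)"

text \<open>Caterpillar-bond graph D_n(a_0..a_{n-1}; b_1..b_{n-1}): spine vertices Sp 0..Sp (n-1);
  Sp (i-1) and Sp i joined by b i parallel edges (1 <= i < n); a i - 1 pendant vertices Pd i j at Sp i.\<close>
datatype cvert = Sp nat | Pd nat nat
datatype cedge = Bond nat nat | Leaf nat nat

definition cat_vertices :: "nat \<Rightarrow> (nat \<Rightarrow> nat) \<Rightarrow> cvert set" where
  "cat_vertices n a = {Sp i | i. i < n} \<union> {Pd i j | i j. i < n \<and> j < a i - 1}"

definition cat_edges :: "nat \<Rightarrow> (nat \<Rightarrow> nat) \<Rightarrow> (nat \<Rightarrow> nat) \<Rightarrow> cedge set" where
  "cat_edges n a b = {Bond i k | i k. 1 \<le> i \<and> i < n \<and> k < b i}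
                   \<union> {Leaf i j | i j. i < n \<and> j < a i - 1}"

fun cat_ends :: "cedge \<Rightarrow> cvert set" where
  "cat_ends (Bond i k) = {Sp (i - 1), Sp i}"
| "cat_ends (Leaf i j) = {Sp i, Pd i j}"

fun cf_p :: "(nat \<Rightarrow> nat) \<Rightarrow> (nat \<Rightarrow> nat) \<Rightarrow> nat \<Rightarrow> nat" where
  "cf_p a b 0 = a 0"
| "cf_p a b (Suc 0) = a 0 * a 1 + b 1"
| "cf_p a b (Suc (Suc k)) = a (k + 2) * cf_p a b (k + 1) + b (k + 2) * cf_p a b k"

end

theory Submission
  imports Defs
begin

text \<open>Classifying a matching by the edge (if any) that covers a vertex v gives the
  vertex recurrence Z(G) = Z(G - v) + (sum over edges e at v of Z(G - ends e)). At the last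
  spine vertex of D_n a matching uses no edge, one of the a_{n-1} - 1 pendant edges (leaving
  D_{n-1}) or one of the b_{n-1} bonds (leaving D_{n-2}), so
  Z(D_n) = a_{n-1} Z(D_{n-1}) + b_{n-1} Z(D_{n-2}), the recurrence of the numerators p_k.\<close>

lemma finite_matchings: "finite E \<Longrightarrow> finite (matchings E ends)"
  unfolding matchings_def by (rule finite_subset[of _ "Pow E"]) auto

lemma matchings_empty [simp]: "matchings {} ends = {{}}"
  unfolding matchings_def by auto

lemma hosoya_eq_card_matchings:
  assumes "finite E"
  shows "hosoya E ends = card (matchings E ends)"
proof -
  have "card M \<le> card E" if "M \<in> matchings E ends" for M
    using that assms card_mono unfolding matchings_def by auto
  then have "matchings E ends = (\<Union>k\<le>card E. {M \<in> matchings E ends. card M = k})"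
    by auto
  also have "card \<dots> = (\<Sum>k\<le>card E. pmatch E ends k)"
    unfolding pmatch_def by (rule card_UN_disjoint) (use finite_matchings[OF assms, of ends] in auto)
  finally show ?thesis unfolding hosoya_def by simp
qed

lemma matchings_split_at_vertex:
  "matchings E ends = matchings {e \<in> E. v \<notin> ends e} ends \<union>
     (\<Union>e \<in> {e \<in> E. v \<in> ends e}. insert e ` matchings {f \<in> E. ends f \<inter> ends e = {}} ends)"
  (is "_ = ?Avoid \<union> ?Cover")
proof (intro equalityI subsetI)
  fix M assume M: "M \<in> matchings E ends"
  show "M \<in> ?Avoid \<union> ?Cover"
  proof (cases "\<exists>e\<in>M. v \<in> ends e")
    case True
    then obtain e where e: "e \<in> M" "v \<in> ends e" by blast
    have "M - {e} \<in> matchings {f \<in> E. ends f \<inter> ends e = {}} ends"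
      using M e unfolding matchings_def by blast
    moreover have "M = insert e (M - {e})" using e by blast
    moreover have "e \<in> {e \<in> E. v \<in> ends e}" using M e unfolding matchings_def by blast
    ultimately show ?thesis by blast
  next
    case False
    then show ?thesis using M unfolding matchings_def by blast
  qed
next
  fix M assume "M \<in> ?Avoid \<union> ?Cover"
  then show "M \<in> matchings E ends"
    unfolding matchings_def by (auto simp: Int_commute)
qed

lemma card_matchings_at_vertex:
  assumes "finite E"
  shows "card (matchings E ends) = card (matchings {e \<in> E. v \<notin> ends e} ends) +
     (\<Sum>e \<in> {e \<in> E. v \<in> ends e}. card (matchings {f \<in> E. ends f \<inter> ends e = {}} ends))"
proof -
  let ?N = "{e \<in> E. v \<in> ends e}"
  let ?R = "\<lambda>e. matchings {f \<in> E. ends f \<inter> ends e = {}} ends"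
  have fin: "finite ?N" "finite (matchings {e \<in> E. v \<notin> ends e} ends)" "\<And>e. finite (?R e)"
    using assms by (auto intro: finite_matchings)
  have card_insert_image: "card (insert e ` ?R e) = card (?R e)" if "e \<in> ?N" for e
  proof (rule card_image, rule inj_onI)
    fix M M' assume "M \<in> ?R e" "M' \<in> ?R e" "insert e M = insert e M'"
    moreover have "e \<notin> M" "e \<notin> M'" if "M \<in> ?R e" "M' \<in> ?R e"
      using that \<open>e \<in> ?N\<close> unfolding matchings_def by auto
    ultimately show "M = M'" by (metis Diff_insert_absorb)
  qed
  have "card (\<Union>e\<in>?N. insert e ` ?R e) = (\<Sum>e\<in>?N. card (insert e ` ?R e))"
    by (rule card_UN_disjoint) (use fin in \<open>auto simp: matchings_def\<close>)
  moreover have "matchings {e \<in> E. v \<notin> ends e} ends \<inter> (\<Union>e\<in>?N. insert e ` ?R e) = {}"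
    unfolding matchings_def by blast
  ultimately show ?thesis
    by (subst matchings_split_at_vertex[of E ends v], subst card_Un_disjoint)
       (use fin card_insert_image in auto)
qed

lemma cat_edges_0 [simp]: "cat_edges 0 a b = {}"
  unfolding cat_edges_def by auto

lemma cat_edges_avoiding_last:
  "{e \<in> cat_edges (Suc m) a b. Sp m \<notin> cat_ends e} = cat_edges m a b"
  unfolding cat_edges_def by (auto simp: less_Suc_eq)

lemma cat_edges_at_last:
  "{e \<in> cat_edges (Suc m) a b. Sp m \<in> cat_ends e} =
     Leaf m ` {..<a m - 1} \<union> (if m = 0 then {} else Bond m ` {..<b m})"
  unfolding cat_edges_def by (auto simp: less_Suc_eq)

lemma cat_edges_disjoint_Leaf:
  "{f \<in> cat_edges (Suc m) a b. cat_ends f \<inter> cat_ends (Leaf m j) = {}} = cat_edges m a b"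
  unfolding cat_edges_def by (auto simp: less_Suc_eq)

lemma cat_edges_disjoint_Bond:
  "{f \<in> cat_edges (Suc m) a b. cat_ends f \<inter> cat_ends (Bond m k) = {}} = cat_edges (m - 1) a b"
  unfolding cat_edges_def by (auto simp: less_Suc_eq)

lemma finite_cat_edges: "finite (cat_edges m a b)"
proof (induction m)
  case (Suc m)
  have "cat_edges (Suc m) a b =
      {e \<in> cat_edges (Suc m) a b. Sp m \<notin> cat_ends e} \<union> {e \<in> cat_edges (Suc m) a b. Sp m \<in> cat_ends e}"
    by blast
  then show ?case using Suc by (simp only: cat_edges_avoiding_last cat_edges_at_last) simp
qed simp

lemma card_matchings_cat_edges_Suc:
  "card (matchings (cat_edges (Suc m) a b) cat_ends) =
     (1 + (a m - 1)) * card (matchings (cat_edges m a b) cat_ends)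
     + (if m = 0 then 0 else b m * card (matchings (cat_edges (m - 1) a b) cat_ends))"
proof -
  let ?Z = "\<lambda>m. card (matchings (cat_edges m a b) cat_ends)"
  let ?Leaves = "Leaf m ` {..<a m - 1}" and ?Bonds = "if m = 0 then {} else Bond m ` {..<b m}"
  let ?R = "\<lambda>e. card (matchings {f \<in> cat_edges (Suc m) a b. cat_ends f \<inter> cat_ends e = {}} cat_ends)"
  have "?Z (Suc m) = ?Z m + (\<Sum>e \<in> ?Leaves \<union> ?Bonds. ?R e)"
    using card_matchings_at_vertex[OF finite_cat_edges, where v = "Sp m"]
    by (simp only: cat_edges_avoiding_last cat_edges_at_last)
  also have "(\<Sum>e \<in> ?Leaves \<union> ?Bonds. ?R e) = (\<Sum>e \<in> ?Leaves. ?R e) + (\<Sum>e \<in> ?Bonds. ?R e)"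
    by (rule sum.union_disjoint) auto
  also have "(\<Sum>e \<in> ?Leaves. ?R e) = (a m - 1) * ?Z m"
    by (simp add: sum.reindex inj_on_def cat_edges_disjoint_Leaf del: cat_ends.simps)
  also have "(\<Sum>e \<in> ?Bonds. ?R e) = (if m = 0 then 0 else b m * ?Z (m - 1))"
    by (simp add: sum.reindex inj_on_def cat_edges_disjoint_Bond del: cat_ends.simps)
  finally show ?thesis by simp
qed

text \<open>Positivity of a is needed only to turn the truncated 1 + (a m - 1) into a m.\<close>

lemma card_matchings_cat_edges_eq_cf_p:
  "\<forall>i\<le>k. 0 < a i \<Longrightarrow> card (matchings (cat_edges (Suc k) a b) cat_ends) = cf_p a b k"
proof (induction a b k rule: cf_p.induct)
  case (1 a b)
  then show ?case by (simp add: card_matchings_cat_edges_Suc)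
next
  case (2 a b)
  then show ?case by (simp add: card_matchings_cat_edges_Suc)
next
  case (3 a b k)
  then show ?case
    by (subst card_matchings_cat_edges_Suc) (simp add: numeral_2_eq_2)
qed

theorem theorem2:
  fixes n :: nat and a b :: "nat \<Rightarrow> nat"
  assumes "n \<ge> 1"
    and "\<forall>i<n. a i > 0"
    and "\<forall>i. 1 \<le> i \<and> i < n \<longrightarrow> b i > 0"
  shows "hosoya (cat_edges n a b) cat_ends = cf_p a b (n - 1)"
proof -
  have "card (matchings (cat_edges (Suc (n - 1)) a b) cat_ends) = cf_p a b (n - 1)"
    by (rule card_matchings_cat_edges_eq_cf_p) (use assms(1,2) in auto)
  then show ?thesis
    using assms(1) by (simp add: hosoya_eq_card_matchings finite_cat_edges)
qed

end
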